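(* Assume (H1) and (H2) hold. Let $R>0$, $S>0$, let $K=K_y\times K_z\subset\mathbb R^d$ be a cube, and let $\eta\in C_0^\infty(\mathbb R^{d-m})$ satisfy $0\le\eta\le1$ and $\eta=1$ on $K_z$. If $\sigma_n\in\mathcal P_R(V)$ converges weakly to $\sigma\in\mathcal P_R(V)$, then for all $i,j$ $$\lim_{n\to\infty}\ \sup_{\mu\in\mathcal M_{K,S}(\eta)}\int_K\Big(|a^{ij}(x,\sigma_n)-a^{ij}(x,\sigma)|+|b^i(x,\sigma_n)-b^i(x,\sigma)|\Big)\mu(dx)=0.$$
   Context: Standing setting. Let $d\ge 1$. For every Borel probability measure $\mu$ on $\mathbb R^d$ there are given Borel functions $x\mapsto a^{ij}(x,\mu)$ and $x\mapsto b^i(x,\mu)$ on $\mathbb R^d$, $1\le i,j\le d$, such that the matrix $A(x,\mu)=(a^{ij}(x,\mu))_{i,j}$ is symmetric and nonnegative definite. Fix $V\in C^2(\mathbb R^d)$ with $V\ge0$ and $V(x)\to+\infty$ as $|x|\to\infty$. For $R>0$, $\mathcal P_R(V)$ is the set of Borel probability measures $\mu$ on $\mathbb R^d$ with $\int V\,d\mu\le R$; $\mathcal P(V)$ is the set of Borel probability measures $\mu$ with $V\in L^1(\mu)$. A sequence $\mu_n\in\mathcal P(V)$ converges $V$-weakly to $\mu\in\mathcal P(V)$ if $\int f\,d\mu_n\to\int f\,d\mu$ for every continuous $f$ with $f(x)/V(x)\to0$ as $|x|\to\infty$. Fix an integer $0\le m\le d$ and write $x=(y,z)$ with $y=(x_1,\dots,x_m)\in\mathbb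 R^m$, $z=(x_{m+1},\dots,x_d)\in\mathbb R^{d-m}$ (if $m=0$ there is no $y$; if $m=d$ there is no $z$). Cubes have edges parallel to the coordinate axes; a cube $K\subset\mathbb R^d$ is written $K=K_y\times K_z$. (H1.1) For every $R>0$ and every cube $K\subset\mathbb R^d$ there is $\lambda_{K,R}>0$ such that $\sum_{i,j\le m}a^{ij}(x,\mu)\xi_i\xi_j\ge\lambda_{K,R}|\xi|^2$ for all $x\in K$, $\mu\in\mathcal P_R(V)$, $\xi\in\mathbb R^m$. (H1.2) For every $R>0$, every cube $K$ and all $i,j$: $\sup_{x\in K,\ \mu\in\mathcal P_R(V)}\big(|a^{ij}(x,\mu)|+|b^i(x,\mu)|\big)<\infty$. (H1.3) For every $R>0$ and every cube $K=K_y\times K_z$ there is a nonnegative continuous monotone function $\omega_{K,R}$ on $[0,\infty)$ with $\omega_{K,R}(0)=0$ such that for all $i,j$ and all $z,z'\in K_z$: $\sup_{y\in K_y,\ \mu\in\mathcal P_R(V)}\big(|a^{ij}(y,z,\mu)-a^{ij}(y,z',\mu)|+|b^i(y,z,\mu)-b^i(y,z',\mu)|\big)\le\omega_{K,R}(|z-z'|)$. (H1) means (H1.1), (H1.2), (H1.3) together. (H2) For every $R>0$, every sequence $\mu_n\in\mathcal P_R(V)$ converging $V$-weakly to some $\mu\in\mathcal P_R(V)$, and all $i,j$: – if $m=0$: $|a^{ij}(x,\mu_n)-a^{ij}(x,\mu)|+|b^i(x,\mu_n)-b^i(x,\mu)|\to0$ for every $x\in\mathbb R^d$; – if $m=1$: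 for a fixed number $\gamma>0$, for every cube $K_y\subset\mathbb R^m$ and every $z\in\mathbb R^{d-m}$, $\int_{K_y}\big(|a^{ij}(y,z,\mu)-a^{ij}(y,z,\mu_n)|^{1+\gamma}+|b^i(y,z,\mu)-b^i(y,z,\mu_n)|^{1+\gamma}\big)dy\to0$; – if $m\ge2$: for every cube $K_y\subset\mathbb R^m$ and every $z\in\mathbb R^{d-m}$, $\int_{K_y}\big(|a^{ij}(y,z,\mu)-a^{ij}(y,z,\mu_n)|^{m}+|b^i(y,z,\mu)-b^i(y,z,\mu_n)|^{m}\big)dy\to0$. The set $\mathcal M_{K,S}(\eta)$: for a cube $K=K_y\times K_z$, a number $S>0$ and $\eta\in C_0^\infty(\mathbb R^{d-m})$ with $0\le\eta\le1$, $\mathcal M_{K,S}(\eta)$ is the set of Borel probability measures $\mu$ on $\mathbb R^d$ such that the projection of $\eta\mu$ onto $\mathbb R^m_y$ (the measure $B\mapsto\int_{B\times\mathbb R^{d-m}}\eta(z)\,\mu(dy\,dz)$) has a density $\varrho$ with respect to Lebesgue measure satisfying $\|\varrho\|_{L^r(K_y)}\le S$, where $r=m/(m-1)$ if $m\ge2$ and $r=(1+\gamma)/\gamma$ if $m=1$ ($\gamma$ from (H2)). If $m=0$, $\mathcal M_{K,S}(\eta)$ is the set of all Borel probability measures on $\mathbb R^d$. *)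

theory Defs
  imports "HOL-Probability.Probability"
begin

text \<open>Points of R^d are vectors real^'n, d = CARD('n). The y-coordinates are the
  indices in a set Y (m = card Y), the z-coordinates are the remaining indices.\<close>

definition borel_prob :: "'a::topological_space measure \<Rightarrow> bool" where
  "borel_prob \<mu> \<longleftrightarrow> prob_space \<mu> \<and> sets \<mu> = sets borel"

definition PR :: "('a::topological_space \<Rightarrow> real) \<Rightarrow> real \<Rightarrow> 'a measure set" where
  "PR V R = {\<mu>. borel_prob \<mu> \<and> (\<integral>\<^sup>+ x. ennreal (V x) \<partial>\<mu>) \<le> ennreal R}"

definition PV :: "('a::topological_space \<Rightarrow> real) \<Rightarrow> 'a measure set" where
  "PV V = {\<mu>. borel_prob \<mu> \<and> integrable \<mu> V}"

definition Vweak_conv ::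
  "('a::real_normed_vector \<Rightarrow> real) \<Rightarrow> (nat \<Rightarrow> 'a measure) \<Rightarrow> 'a measure \<Rightarrow> bool" where
  "Vweak_conv V \<mu>s \<mu> \<longleftrightarrow> (\<forall>n. \<mu>s n \<in> PV V) \<and> \<mu> \<in> PV V \<and>
     (\<forall>f. continuous_on UNIV f \<and> ((\<lambda>x. f x / V x) \<longlongrightarrow> 0) at_infinity \<longrightarrow>
        (\<lambda>n. integral\<^sup>L (\<mu>s n) f) \<longlonglongrightarrow> integral\<^sup>L \<mu> f)"

definition weak_conv_bc :: "(nat \<Rightarrow> 'a::topological_space measure) \<Rightarrow> 'a measure \<Rightarrow> bool" where
  "weak_conv_bc \<mu>s \<mu> \<longleftrightarrow> (\<forall>f::'a \<Rightarrow> real. continuous_on UNIV f \<and> bounded (range f) \<longrightarrow>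
        (\<lambda>n. integral\<^sup>L (\<mu>s n) f) \<longlonglongrightarrow> integral\<^sup>L \<mu> f)"

definition C2 :: "(real^'n \<Rightarrow> real) \<Rightarrow> bool" where
  "C2 f \<longleftrightarrow> (\<exists>g :: 'n \<Rightarrow> real^'n \<Rightarrow> real. \<exists>h :: 'n \<Rightarrow> 'n \<Rightarrow> real^'n \<Rightarrow> real.
      (\<forall>x. (f has_derivative (\<lambda>v. \<Sum>i\<in>UNIV. v$i * g i x)) (at x)) \<and>
      (\<forall>i x. (g i has_derivative (\<lambda>v. \<Sum>j\<in>UNIV. v$j * h i j x)) (at x)) \<and>
      (\<forall>i j. continuous_on UNIV (h i j)))"

coinductive smooth :: "(real^'n \<Rightarrow> real) \<Rightarrow> bool" where
  "(\<And>x. (f has_derivative (\<lambda>v. \<Sum>i\<in>UNIV. v$i * g i x)) (at x)) \<Longrightarrow>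
   (\<And>i. smooth (g i)) \<Longrightarrow> smooth f"

text \<open>A function eta in C_0^\<infinity>(R^{d-m}) with 0 \<le> eta \<le> 1, represented as the function
  x \<mapsto> eta(z(x)) on R^d.\<close>
definition z_cutoff :: "'n set \<Rightarrow> (real^'n \<Rightarrow> real) \<Rightarrow> bool" where
  "z_cutoff Y \<eta> \<longleftrightarrow> smooth \<eta> \<and>
     (\<forall>x x'. (\<forall>i. i \<notin> Y \<longrightarrow> x$i = x'$i) \<longrightarrow> \<eta> x = \<eta> x') \<and>
     (\<exists>r. \<forall>x. \<eta> x \<noteq> 0 \<longrightarrow> (\<forall>i. i \<notin> Y \<longrightarrow> \<bar>x$i\<bar> \<le> r)) \<and>
     (\<forall>x. 0 \<le> \<eta> x \<and> \<eta> x \<le> 1)"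

definition cube :: "real^'n \<Rightarrow> real \<Rightarrow> (real^'n) set" where
  "cube c h = {x. \<forall>i. c$i \<le> x$i \<and> x$i \<le> c$i + h}"

text \<open>Its y-part K_y, as a set of points of R^Y (functions on Y).\<close>
definition ycube :: "'n set \<Rightarrow> real^'n \<Rightarrow> real \<Rightarrow> ('n \<Rightarrow> real) set" where
  "ycube Y c h = {y. \<forall>i\<in>Y. c$i \<le> y i \<and> y i \<le> c$i + h}"

text \<open>Its z-part K_z, as the set of x whose z-coordinates lie in it.\<close>
definition zcube :: "'n set \<Rightarrow> real^'n \<Rightarrow> real \<Rightarrow> (real^'n) set" where
  "zcube Y c h = {x. \<forall>i. i \<notin> Y \<longrightarrow> c$i \<le> x$i \<and> x$i \<le> c$i + h}"

abbreviation lebY :: "'n set \<Rightarrow> ('n \<Rightarrow> real) measure" where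
  "lebY Y \<equiv> Pi\<^sub>M Y (\<lambda>_. lborel)"

definition yproj :: "'n set \<Rightarrow> real^'n \<Rightarrow> ('n \<Rightarrow> real)" where
  "yproj Y x = restrict (\<lambda>i. x$i) Y"

definition yjoin :: "'n set \<Rightarrow> ('n \<Rightarrow> real) \<Rightarrow> real^'n \<Rightarrow> real^'n" where
  "yjoin Y y x0 = (\<chi> i. if i \<in> Y then y i else x0$i)"

definition r_exp :: "nat \<Rightarrow> real \<Rightarrow> real" where
  "r_exp m \<gamma> = (if m = 1 then (1 + \<gamma>) / \<gamma> else real m / (real m - 1))"

definition p_exp :: "nat \<Rightarrow> real \<Rightarrow> real" where
  "p_exp m \<gamma> = (if m = 1 then 1 + \<gamma> else real m)"

definition Mset :: "'n set \<Rightarrow> real \<Rightarrow> real^'n \<Rightarrow> real \<Rightarrow> real \<Rightarrow> (real^'n \<Rightarrow> real)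
    \<Rightarrow> (real^'n) measure set" where
  "Mset Y \<gamma> c h S \<eta> = {\<mu>. borel_prob \<mu> \<and>
     (Y \<noteq> {} \<longrightarrow> (\<exists>\<rho>. \<rho> \<in> borel_measurable (lebY Y) \<and> (\<forall>y. 0 \<le> \<rho> y) \<and>
        distr (density \<mu> (\<lambda>x. ennreal (\<eta> x))) (lebY Y) (yproj Y)
          = density (lebY Y) (\<lambda>y. ennreal (\<rho> y)) \<and>
        (\<integral>\<^sup>+ y. indicator (ycube Y c h) y * ennreal (\<rho> y powr r_exp (card Y) \<gamma>) \<partial>lebY Y)
          \<le> ennreal (S powr r_exp (card Y) \<gamma>)))}"

definition coeff_ok :: "('n \<Rightarrow> 'n \<Rightarrow> real^'n \<Rightarrow> (real^'n) measure \<Rightarrow> real)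
    \<Rightarrow> ('n \<Rightarrow> real^'n \<Rightarrow> (real^'n) measure \<Rightarrow> real) \<Rightarrow> bool" where
  "coeff_ok a b \<longleftrightarrow> (\<forall>\<mu>. borel_prob \<mu> \<longrightarrow>
     (\<forall>i j. (\<lambda>x. a i j x \<mu>) \<in> borel_measurable borel) \<and>
     (\<forall>i. (\<lambda>x. b i x \<mu>) \<in> borel_measurable borel) \<and>
     (\<forall>i j x. a i j x \<mu> = a j i x \<mu>) \<and>
     (\<forall>x \<xi>. 0 \<le> (\<Sum>i\<in>UNIV. \<Sum>j\<in>UNIV. a i j x \<mu> * \<xi>$i * \<xi>$j)))"

definition H1_1 where
  "H1_1 V Y a \<longleftrightarrow> (\<forall>R c h. h > 0 \<longrightarrow> (\<exists>lam>0. \<forall>x\<in>cube c h. \<forall>\<mu>\<in>PR V R. \<forall>\<xi>::'n \<Rightarrow> real.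
      (\<Sum>i\<in>Y. \<Sum>j\<in>Y. a i j x \<mu> * \<xi> i * \<xi> j) \<ge> lam * (\<Sum>i\<in>Y. (\<xi> i)\<^sup>2)))"

definition H1_2 where
  "H1_2 V a b \<longleftrightarrow> (\<forall>R c h i j. h > 0 \<longrightarrow> (\<exists>C. \<forall>x\<in>cube c h. \<forall>\<mu>\<in>PR V R.
      \<bar>a i j x \<mu>\<bar> + \<bar>b i x \<mu>\<bar> \<le> C))"

text \<open>For x, x' with the same y-part, the distance of their z-parts is norm (x - x').\<close>
definition H1_3 where
  "H1_3 V Y a b \<longleftrightarrow> (\<forall>R c h. h > 0 \<longrightarrow> (\<exists>\<omega>::real \<Rightarrow> real.
      continuous_on {0..} \<omega> \<and> mono_on {0..} \<omega> \<and> (\<forall>t\<ge>0. 0 \<le> \<omega> t) \<and> \<omega> 0 = 0 \<and>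
      (\<forall>i j. \<forall>x\<in>cube c h. \<forall>x'\<in>cube c h. \<forall>\<mu>\<in>PR V R. (\<forall>k\<in>Y. x$k = x'$k) \<longrightarrow>
         \<bar>a i j x \<mu> - a i j x' \<mu>\<bar> + \<bar>b i x \<mu> - b i x' \<mu>\<bar> \<le> \<omega> (norm (x - x')))))"

definition H2 where
  "H2 V Y \<gamma> a b \<longleftrightarrow> (\<forall>R \<mu>s \<mu>. (\<forall>n. \<mu>s n \<in> PR V R) \<and> \<mu> \<in> PR V R \<and> Vweak_conv V \<mu>s \<mu> \<longrightarrow>
     (\<forall>i j. (if Y = {} then
        (\<forall>x. (\<lambda>n. \<bar>a i j x (\<mu>s n) - a i j x \<mu>\<bar> + \<bar>b i x (\<mu>s n) - b i x \<mu>\<bar>) \<longlonglongrightarrow> 0)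
      else
        (\<forall>c h x0. h > 0 \<longrightarrow>
          (\<lambda>n. \<integral>\<^sup>+ y. indicator (ycube Y c h) y *
              ennreal (\<bar>a i j (yjoin Y y x0) \<mu> - a i j (yjoin Y y x0) (\<mu>s n)\<bar> powr p_exp (card Y) \<gamma>
                     + \<bar>b i (yjoin Y y x0) \<mu> - b i (yjoin Y y x0) (\<mu>s n)\<bar> powr p_exp (card Y) \<gamma>)
              \<partial>lebY Y) \<longlonglongrightarrow> 0))))"

end

theory Submission
  imports Defs
begin

text \<open>Weak convergence together with the uniform bound on the V-moments upgrades to
  V-weak convergence, so (H2) applies: on every z-slice of K the coefficient differences
  tend to 0 in L^p(K_y). By (H1.3) and compactness, finitely many z-slices approximate the
  integrand on K up to \<epsilon>, uniformly in n. For \<mu> in M_{K,S}(\<eta>), since \<eta> = 1 on K_z,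
  integrating a slice against \<mu> amounts to integrating it over K_y against the y-density
  \<rho> of \<eta>\<mu>, and Young's inequality with a scale t bounds this by
  t^p ||slice||_p^p + 2 S^r / t^r, uniformly in \<mu>. Choosing first t and then n large
  gives the claim.\<close>

lemma Youngs_inequality_scaled:
  fixes p r t u v :: real
  assumes p: "p > 0" and r: "r > 0" and pr: "1/p + 1/r = 1"
    and t: "t > 0" and u: "u \<ge> 0" and v: "v \<ge> 0"
  shows "u * v \<le> t powr p * u powr p + v powr r / t powr r"
proof -
  have "1/p < 1" "1/r < 1" using p r pr by (smt (verit) divide_pos_pos zero_less_one)+
  then have p1: "p > 1" and r1: "r > 1" using p r by (simp_all add: divide_less_eq)
  have "(t * u) * (v / t) \<le> (t * u) powr p / p + (v / t) powr r / r"
    using p1 r1 pr t u v by (intro Youngs_inequality) auto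
  also have "\<dots> \<le> (t * u) powr p + (v / t) powr r"
    using p1 r1 by (intro add_mono) (auto simp: divide_le_eq mult_le_cancel_left1)
  finally show ?thesis
    using t u v by (simp add: powr_mult powr_divide)
qed

lemma p_exp_r_exp_conjugate:
  assumes m: "m > 0" and \<gamma>: "\<gamma> > 0"
  shows "p_exp m \<gamma> > 0" "r_exp m \<gamma> > 0" "1 / p_exp m \<gamma> + 1 / r_exp m \<gamma> = 1"
proof -
  consider "m = 1" | "real m \<ge> 2" using m by linarith
  then have "p_exp m \<gamma> > 0 \<and> r_exp m \<gamma> > 0 \<and> 1 / p_exp m \<gamma> + 1 / r_exp m \<gamma> = 1"
  proof cases
    case 1
    then show ?thesis using \<gamma> by (simp add: p_exp_def r_exp_def field_simps)
  next
    case 2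
    then show ?thesis by (simp add: p_exp_def r_exp_def field_simps)
  qed
  then show "p_exp m \<gamma> > 0" "r_exp m \<gamma> > 0" "1 / p_exp m \<gamma> + 1 / r_exp m \<gamma> = 1"
    by auto
qed

lemma C2_imp_continuous: "C2 f \<Longrightarrow> continuous_on UNIV f"
proof -
  assume "C2 f"
  then obtain g where "\<forall>x. (f has_derivative (\<lambda>v. \<Sum>i\<in>UNIV. v$i * g i x)) (at x)"
    unfolding C2_def by blast
  then show ?thesis
    by (intro continuous_at_imp_continuous_on ballI) (blast intro: has_derivative_continuous)
qed

lemma smooth_imp_continuous: "smooth f \<Longrightarrow> continuous_on UNIV f"
  by (erule smooth.cases) (auto intro!: continuous_at_imp_continuous_on has_derivative_continuous)

lemma ennreal_tendsto_0I:
  assumes "\<And>e::real. e > 0 \<Longrightarrow> eventually (\<lambda>n. f n \<le> ennreal e) F"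
  shows "(f \<longlongrightarrow> (0::ennreal)) F"
proof (rule order_tendstoI)
  fix a :: ennreal assume "0 < a"
  then obtain b where "0 < b" "b < a" using dense by blast
  then obtain e where "b = ennreal e" "e > 0"
    by (cases b) (auto simp: top.not_eq_extremum)
  from assms[OF \<open>e > 0\<close>] show "eventually (\<lambda>n. f n < a) F"
    by eventually_elim (use \<open>b < a\<close> \<open>b = ennreal e\<close> in auto)
qed simp

section \<open>From weak to V-weak convergence\<close>

lemma PR_integrable:
  fixes V :: "'a::topological_space \<Rightarrow> real"
  assumes Vm: "V \<in> borel_measurable borel" and V0: "\<forall>x. 0 \<le> V x" and R: "R \<ge> 0"
    and \<mu>: "\<mu> \<in> PR V R"
  shows "integrable \<mu> V" "integral\<^sup>L \<mu> V \<le> R"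
proof -
  have sets: "sets \<mu> = sets borel" using \<mu> by (simp add: PR_def borel_prob_def)
  have le: "(\<integral>\<^sup>+ x. ennreal (V x) \<partial>\<mu>) \<le> ennreal R" using \<mu> by (simp add: PR_def)
  have "V \<in> borel_measurable \<mu>" using Vm by (simp add: measurable_cong_sets[OF sets refl])
  then show int: "integrable \<mu> V"
    using le V0 by (intro integrableI_bounded) (auto simp: top_unique intro: le_less_trans)
  have "ennreal (integral\<^sup>L \<mu> V) = (\<integral>\<^sup>+ x. ennreal (V x) \<partial>\<mu>)"
    using int V0 by (simp add: nn_integral_eq_integral)
  with le have "ennreal (integral\<^sup>L \<mu> V) \<le> ennreal R" by simp
  with R show "integral\<^sup>L \<mu> V \<le> R" by (simp add: ennreal_le_iff)
qed

definition ball_cutoff :: "real \<Rightarrow> 'a::real_normed_vector \<Rightarrow> real" where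
  "ball_cutoff M x = max 0 (min 1 (M + 1 - norm x))"

lemma ball_cutoff_bounds: "0 \<le> ball_cutoff M x" "ball_cutoff M x \<le> 1"
  by (auto simp: ball_cutoff_def)

lemma ball_cutoff_eq_1: "norm x \<le> M \<Longrightarrow> ball_cutoff M x = 1"
  by (simp add: ball_cutoff_def)

lemma ball_cutoff_eq_0: "M + 1 \<le> norm x \<Longrightarrow> ball_cutoff M x = 0"
  by (simp add: ball_cutoff_def)

lemma continuous_on_ball_cutoff [continuous_intros]: "continuous_on A (ball_cutoff M)"
  unfolding ball_cutoff_def by (intro continuous_intros)

lemma bounded_range_mult_ball_cutoff:
  fixes f :: "'a::{real_normed_vector, heine_borel} \<Rightarrow> real"
  assumes "continuous_on UNIV f"
  shows "bounded (range (\<lambda>x. f x * ball_cutoff M x))"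
proof -
  have "compact (f ` cball 0 (M + 1))"
    using assms by (intro compact_continuous_image) (auto intro: continuous_on_subset)
  then obtain B where "\<forall>y\<in>f ` cball 0 (M + 1). norm y \<le> B"
    using compact_imp_bounded bounded_iff by metis
  then have B: "\<And>x. x \<in> cball 0 (M + 1) \<Longrightarrow> \<bar>f x\<bar> \<le> B" by auto
  have "\<bar>f x * ball_cutoff M x\<bar> \<le> max B 0" for x
  proof (cases "norm x \<le> M + 1")
    case True
    then have "\<bar>f x\<bar> * \<bar>ball_cutoff M x\<bar> \<le> B * 1"
      using B[of x] ball_cutoff_bounds[of M x] by (intro mult_mono) auto
    then show ?thesis by (simp add: abs_mult)
  qed (simp add: ball_cutoff_eq_0)
  then show ?thesis by (auto simp: bounded_iff)
qed

lemma ratio_tendsto_0_imp_abs_le_mult: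
  fixes f V :: "'a::real_normed_vector \<Rightarrow> real"
  assumes "((\<lambda>x. f x / V x) \<longlongrightarrow> 0) at_infinity" "filterlim V at_top at_infinity" "e > 0"
  obtains M where "\<And>x. M \<le> norm x \<Longrightarrow> \<bar>f x\<bar> \<le> e * V x"
proof -
  have "eventually (\<lambda>x. \<bar>f x / V x\<bar> < e) at_infinity"
    using tendstoD[OF assms(1) assms(3)] by simp
  moreover have "eventually (\<lambda>x. V x \<ge> 1) at_infinity"
    using assms(2) by (simp add: filterlim_at_top)
  ultimately have "eventually (\<lambda>x. \<bar>f x\<bar> \<le> e * V x) at_infinity"
    by eventually_elim (simp add: abs_divide divide_less_eq)
  then show ?thesis using that by (auto simp: eventually_at_infinity)
qed

lemma PR_integral_ball_cutoff_close:
  fixes f V :: "'a::{real_normed_vector, heine_borel} \<Rightarrow> real"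
  assumes Vm: "V \<in> borel_measurable borel" and V0: "\<forall>x. 0 \<le> V x" and R: "R \<ge> 0"
    and \<mu>: "\<mu> \<in> PR V R" and f: "continuous_on UNIV f" and \<epsilon>: "\<epsilon> \<ge> 0"
    and tail: "\<And>x. M \<le> norm x \<Longrightarrow> \<bar>f x\<bar> \<le> \<epsilon> * V x"
  shows "\<bar>integral\<^sup>L \<mu> f - integral\<^sup>L \<mu> (\<lambda>x. f x * ball_cutoff M x)\<bar> \<le> \<epsilon> * R"
proof -
  interpret prob_space \<mu> using \<mu> by (simp add: PR_def borel_prob_def)
  have sets: "sets \<mu> = sets borel" using \<mu> by (simp add: PR_def borel_prob_def)
  have [measurable]: "f \<in> borel_measurable \<mu>" "ball_cutoff M \<in> borel_measurable \<mu>"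
    using f continuous_on_ball_cutoff
    by (auto simp: measurable_cong_sets[OF sets refl] intro: borel_measurable_continuous_onI)
  have intV: "integrable \<mu> V" and intV_le: "integral\<^sup>L \<mu> V \<le> R"
    using PR_integrable[OF Vm V0 R \<mu>] by auto
  have outer: "\<bar>f x * (1 - ball_cutoff M x)\<bar> \<le> \<epsilon> * V x" for x
  proof (cases "M \<le> norm x")
    case True
    have "\<bar>f x\<bar> * \<bar>1 - ball_cutoff M x\<bar> \<le> \<epsilon> * V x * 1"
      using tail[OF True] ball_cutoff_bounds[of M x] by (intro mult_mono) auto
    then show ?thesis by (simp add: abs_mult)
  qed (use \<epsilon> V0 in \<open>simp add: ball_cutoff_eq_1\<close>)
  obtain B where "\<forall>y\<in>range (\<lambda>x. f x * ball_cutoff M x). norm y \<le> B"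
    using bounded_range_mult_ball_cutoff[OF f] bounded_iff by metis
  then have int_inner: "integrable \<mu> (\<lambda>x. f x * ball_cutoff M x)"
    by (intro integrable_const_bound[where B=B]) auto
  have int_outer: "integrable \<mu> (\<lambda>x. f x * (1 - ball_cutoff M x))"
  proof (rule Bochner_Integration.integrable_bound[OF integrable_mult_right[OF intV]])
    show "AE x in \<mu>. norm (f x * (1 - ball_cutoff M x)) \<le> norm (\<epsilon> * V x)"
      using outer order_trans abs_ge_self by (intro AE_I2) (simp, blast)
  qed measurable
  have "integral\<^sup>L \<mu> f - integral\<^sup>L \<mu> (\<lambda>x. f x * ball_cutoff M x)
      = integral\<^sup>L \<mu> (\<lambda>x. f x * (1 - ball_cutoff M x))"
  proof -
    have "integrable \<mu> f"
      using Bochner_Integration.integrable_add[OF int_inner int_outer] by (simp add: algebra_simps)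
    then show ?thesis
      using int_inner by (simp add: right_diff_distrib flip: Bochner_Integration.integral_diff)
  qed
  also have "\<bar>\<dots>\<bar> \<le> integral\<^sup>L \<mu> (\<lambda>x. \<bar>f x * (1 - ball_cutoff M x)\<bar>)"
    by (rule integral_abs_bound)
  also have "\<dots> \<le> integral\<^sup>L \<mu> (\<lambda>x. \<epsilon> * V x)"
    using int_outer intV outer by (intro integral_mono) auto
  also have "\<dots> \<le> \<epsilon> * R" using intV_le \<epsilon> by (simp add: mult_left_mono)
  finally show ?thesis .
qed

lemma weak_conv_bc_imp_Vweak_conv:
  fixes V :: "'a::{real_normed_vector, heine_borel} \<Rightarrow> real"
  assumes Vc: "continuous_on UNIV V" and V0: "\<forall>x. 0 \<le> V x"
    and V_inf: "filterlim V at_top at_infinity" and R: "R \<ge> 0"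
    and \<sigma>s: "\<forall>n. \<sigma>s n \<in> PR V R" and \<sigma>: "\<sigma> \<in> PR V R" and weak: "weak_conv_bc \<sigma>s \<sigma>"
  shows "Vweak_conv V \<sigma>s \<sigma>"
proof -
  have Vm: "V \<in> borel_measurable borel" using Vc by (rule borel_measurable_continuous_onI)
  have PR_PV: "\<mu> \<in> PV V" if "\<mu> \<in> PR V R" for \<mu>
    using that PR_integrable[OF Vm V0 R that] by (simp add: PR_def PV_def)
  have "(\<lambda>n. integral\<^sup>L (\<sigma>s n) f) \<longlonglongrightarrow> integral\<^sup>L \<sigma> f"
    if f: "continuous_on UNIV f" and ratio: "((\<lambda>x. f x / V x) \<longlongrightarrow> 0) at_infinity" for f
  proof (rule tendstoI)
    fix e :: real assume e: "e > 0"
    define \<epsilon> where "\<epsilon> = e / (3 * (R + 1))"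
    have \<epsilon>: "\<epsilon> > 0" "\<epsilon> * R < e / 3" using e R by (auto simp: \<epsilon>_def field_simps)
    obtain M where tail: "\<And>x. M \<le> norm x \<Longrightarrow> \<bar>f x\<bar> \<le> \<epsilon> * V x"
      using ratio_tendsto_0_imp_abs_le_mult[OF ratio V_inf \<epsilon>(1)] by blast
    define g where "g x = f x * ball_cutoff M x" for x
    have close: "\<bar>integral\<^sup>L \<mu> f - integral\<^sup>L \<mu> g\<bar> < e / 3" if "\<mu> \<in> PR V R" for \<mu>
      using PR_integral_ball_cutoff_close[where M=M, OF Vm V0 R that f less_imp_le[OF \<epsilon>(1)] tail] \<epsilon>(2)
      unfolding g_def by linarith
    have "continuous_on UNIV g" "bounded (range g)"
      using f bounded_range_mult_ball_cutoff[OF f] unfolding g_def by (auto intro!: continuous_intros)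
    then have "(\<lambda>n. integral\<^sup>L (\<sigma>s n) g) \<longlonglongrightarrow> integral\<^sup>L \<sigma> g"
      using weak by (simp add: weak_conv_bc_def)
    then have "eventually (\<lambda>n. \<bar>integral\<^sup>L (\<sigma>s n) g - integral\<^sup>L \<sigma> g\<bar> < e / 3) sequentially"
      using e by (auto dest: tendstoD[where e="e / 3"] simp: dist_real_def)
    then show "eventually (\<lambda>n. dist (integral\<^sup>L (\<sigma>s n) f) (integral\<^sup>L \<sigma> f) < e) sequentially"
    proof eventually_elim
      case (elim n)
      with close[of "\<sigma>s n"] close[OF \<sigma>] \<sigma>s show ?case
        unfolding dist_real_def abs_less_iff by auto
    qed
  qed
  then show ?thesis
    using \<sigma>s \<sigma> PR_PV by (auto simp: Vweak_conv_def)
qed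

section \<open>Slices of the cube\<close>

lemma yjoin_yproj_nth: "yjoin Y (yproj Y x) x0 $ k = (if k \<in> Y then x $ k else x0 $ k)"
  by (simp add: yjoin_def yproj_def)

lemma yjoin_yproj_empty [simp]: "yjoin {} (yproj {} x) x0 = x0"
  by (simp add: vec_eq_iff yjoin_yproj_nth)

lemma norm_diff_yjoin_yproj_le: "norm (x - yjoin Y (yproj Y x) x0) \<le> norm (x - x0)"
  unfolding norm_vec_def by (rule L2_set_mono) (auto simp: yjoin_yproj_nth)

lemma yjoin_yproj_in_cube: "x \<in> cube c h \<Longrightarrow> x0 \<in> cube c h \<Longrightarrow> yjoin Y (yproj Y x) x0 \<in> cube c h"
  by (simp add: cube_def yjoin_yproj_nth)

lemma cube_yproj_zcube: "x \<in> cube c h \<Longrightarrow> yproj Y x \<in> ycube Y c h \<and> x \<in> zcube Y c h"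
  by (simp add: cube_def ycube_def zcube_def yproj_def)

lemma compact_cube: "compact (cube c h)"
proof -
  have "cube c h = cbox c (\<chi> i. c $ i + h)" by (auto simp: cube_def mem_box_cart)
  then show ?thesis by simp
qed

lemma yjoin_measurable: "(\<lambda>y. yjoin Y y x0) \<in> borel_measurable (lebY Y)"
proof (subst borel_measurable_euclidean_space, intro ballI)
  fix b :: "real^'a" assume "b \<in> Basis"
  then obtain i where b: "b = axis i 1" by (auto simp: Basis_vec_def)
  have "(\<lambda>y. yjoin Y y x0 \<bullet> b) = (\<lambda>y. if i \<in> Y then y i else x0 $ i)"
    by (auto simp: b yjoin_def inner_axis)
  then show "(\<lambda>y. yjoin Y y x0 \<bullet> b) \<in> borel_measurable (lebY Y)"
    by (cases "i \<in> Y") (auto intro: measurable_component_singleton)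
qed

lemma yproj_measurable: "sets M = sets borel \<Longrightarrow> yproj Y \<in> M \<rightarrow>\<^sub>M lebY Y"
  unfolding yproj_def
  by (subst measurable_cong_sets[of _ borel _ "lebY Y"]) (auto intro!: measurable_restrict)

lemma indicator_ycube_measurable [measurable]:
  "(\<lambda>y. indicator (ycube Y c h) y :: ennreal) \<in> borel_measurable (lebY Y)"
proof -
  have "ycube Y c h \<inter> space (lebY Y) = PiE Y (\<lambda>i. {c$i..c$i+h})"
    by (auto simp: ycube_def space_PiM PiE_def Pi_def)
  moreover have "PiE Y (\<lambda>i. {c$i..c$i+h}) \<in> sets (lebY Y)"
    by (rule sets_PiM_I_finite) auto
  ultimately show ?thesis by (subst borel_measurable_indicator_iff) simp
qed

lemma cube_finite_slices_approx:
  fixes g :: "'i \<Rightarrow> real^'n \<Rightarrow> real"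
  assumes \<omega>: "continuous_on {0..} \<omega>" "\<omega> 0 = 0" and \<epsilon>: "\<epsilon> > 0"
    and osc: "\<And>i x x'. x \<in> cube c h \<Longrightarrow> x' \<in> cube c h \<Longrightarrow> (\<forall>k\<in>Y. x $ k = x' $ k) \<Longrightarrow>
      g i x \<le> g i x' + \<omega> (norm (x - x'))"
  obtains N where "finite N" "N \<subseteq> cube c h"
    "\<And>x. x \<in> cube c h \<Longrightarrow> \<exists>x0\<in>N. \<forall>i. g i x \<le> g i (yjoin Y (yproj Y x) x0) + \<epsilon>"
proof -
  obtain d where d: "d > 0" "\<And>t. 0 \<le> t \<Longrightarrow> t < d \<Longrightarrow> \<omega> t < \<epsilon>"
    using \<omega> \<epsilon> unfolding continuous_on_iff by (force simp: dist_real_def)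
  obtain N where N: "finite N" "N \<subseteq> cube c h" "cube c h \<subseteq> (\<Union>x0\<in>N. ball x0 d)"
    using seq_compact_imp_totally_bounded[OF compact_imp_seq_compact[OF compact_cube]] d(1)
    by metis
  show ?thesis
  proof (rule that[OF N(1,2)])
    fix x assume x: "x \<in> cube c h"
    then obtain x0 where x0: "x0 \<in> N" "norm (x - x0) < d"
      using N(3) by (auto simp: dist_norm norm_minus_commute)
    let ?x' = "yjoin Y (yproj Y x) x0"
    have "\<omega> (norm (x - ?x')) < \<epsilon>"
      using d(2) norm_diff_yjoin_yproj_le[of x Y x0] x0(2) by simp
    moreover have "g i x \<le> g i ?x' + \<omega> (norm (x - ?x'))" for i
      using x x0 N(2) by (intro osc) (auto simp: yjoin_yproj_in_cube yjoin_yproj_nth)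
    ultimately have "\<forall>i. g i x \<le> g i ?x' + \<epsilon>" by (smt (verit))
    with x0(1) show "\<exists>x0\<in>N. \<forall>i. g i x \<le> g i (yjoin Y (yproj Y x) x0) + \<epsilon>" by blast
  qed
qed

section \<open>Integrals against measures in M_{K,S}(\<eta>)\<close>

lemma Mset_yproj_density:
  assumes \<mu>: "\<mu> \<in> Mset Y \<gamma> c h S \<eta>" and Y: "Y \<noteq> {}" and \<eta>: "\<eta> \<in> borel_measurable borel"
  obtains \<rho> where "\<rho> \<in> borel_measurable (lebY Y)" "\<And>y. 0 \<le> \<rho> y"
    "(\<integral>\<^sup>+ y. indicator (ycube Y c h) y * ennreal (\<rho> y powr r_exp (card Y) \<gamma>) \<partial>lebY Y)
       \<le> ennreal (S powr r_exp (card Y) \<gamma>)"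
    "\<And>G. G \<in> borel_measurable (lebY Y) \<Longrightarrow>
       (\<integral>\<^sup>+ x. ennreal (\<eta> x) * G (yproj Y x) \<partial>\<mu>) = (\<integral>\<^sup>+ y. ennreal (\<rho> y) * G y \<partial>lebY Y)"
proof -
  from \<mu> Y obtain \<rho> where sets: "sets \<mu> = sets borel" and \<rho>: "\<rho> \<in> borel_measurable (lebY Y)"
    "\<forall>y. 0 \<le> \<rho> y"
    "(\<integral>\<^sup>+ y. indicator (ycube Y c h) y * ennreal (\<rho> y powr r_exp (card Y) \<gamma>) \<partial>lebY Y)
       \<le> ennreal (S powr r_exp (card Y) \<gamma>)"
    and dens: "distr (density \<mu> (\<lambda>x. ennreal (\<eta> x))) (lebY Y) (yproj Y)
      = density (lebY Y) (\<lambda>y. ennreal (\<rho> y))"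
    unfolding Mset_def borel_prob_def by blast
  have "(\<integral>\<^sup>+ x. ennreal (\<eta> x) * G (yproj Y x) \<partial>\<mu>) = (\<integral>\<^sup>+ y. ennreal (\<rho> y) * G y \<partial>lebY Y)"
    if G: "G \<in> borel_measurable (lebY Y)" for G
  proof -
    have [measurable]: "\<eta> \<in> borel_measurable \<mu>" "yproj Y \<in> \<mu> \<rightarrow>\<^sub>M lebY Y"
      using \<eta> yproj_measurable[OF sets] by (auto simp: measurable_cong_sets[OF sets refl])
    have "(\<integral>\<^sup>+ x. ennreal (\<eta> x) * G (yproj Y x) \<partial>\<mu>)
        = (\<integral>\<^sup>+ x. G (yproj Y x) \<partial>density \<mu> (\<lambda>x. ennreal (\<eta> x)))"
      using G by (simp add: nn_integral_density)
    also have "\<dots> = (\<integral>\<^sup>+ y. G y \<partial>distr (density \<mu> (\<lambda>x. ennreal (\<eta> x))) (lebY Y) (yproj Y))"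
      using G by (simp add: nn_integral_distr)
    also have "\<dots> = (\<integral>\<^sup>+ y. ennreal (\<rho> y) * G y \<partial>lebY Y)"
      unfolding dens using \<rho>(1) G by (simp add: nn_integral_density)
    finally show ?thesis .
  qed
  with \<rho> that show ?thesis by blast
qed

text \<open>The free scale t trades the L^p-size of u and v against the L^r-bound on \<rho>.\<close>
lemma nn_integral_mult_Young_le:
  fixes \<rho> u v :: "'a \<Rightarrow> real"
  assumes [measurable]: "\<rho> \<in> borel_measurable M" "u \<in> borel_measurable M" "v \<in> borel_measurable M"
    and A: "(\<lambda>y. indicator A y :: ennreal) \<in> borel_measurable M"
    and nonneg: "\<And>y. 0 \<le> \<rho> y" "\<And>y. 0 \<le> u y" "\<And>y. 0 \<le> v y"
    and p: "p > 0" and r: "r > 0" and pr: "1/p + 1/r = 1" and t: "t > 0"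
    and \<rho>_le: "(\<integral>\<^sup>+ y. indicator A y * ennreal (\<rho> y powr r) \<partial>M) \<le> ennreal (S powr r)"
  shows "(\<integral>\<^sup>+ y. ennreal (\<rho> y) * (indicator A y * ennreal (u y + v y)) \<partial>M)
    \<le> ennreal (t powr p) * (\<integral>\<^sup>+ y. indicator A y * ennreal (u y powr p + v y powr p) \<partial>M)
      + ennreal (2 * S powr r / t powr r)"
proof -
  have pointwise: "ennreal (\<rho> y) * (indicator A y * ennreal (u y + v y))
      \<le> ennreal (t powr p) * (indicator A y * ennreal (u y powr p + v y powr p))
        + ennreal (2 / t powr r) * (indicator A y * ennreal (\<rho> y powr r))" for y
  proof (cases "y \<in> A")
    case True
    have "u y * \<rho> y \<le> t powr p * u y powr p + \<rho> y powr r / t powr r"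
         "v y * \<rho> y \<le> t powr p * v y powr p + \<rho> y powr r / t powr r"
      using nonneg p r pr t by (auto intro: Youngs_inequality_scaled)
    then have "\<rho> y * (u y + v y) \<le> t powr p * (u y powr p + v y powr p) + 2 / t powr r * \<rho> y powr r"
      by (simp add: algebra_simps)
    then show ?thesis
      using True nonneg
      by (simp add: ennreal_leI flip: ennreal_mult ennreal_plus del: ennreal_plus)
  qed simp
  have m1: "(\<lambda>y. indicator A y * ennreal (u y powr p + v y powr p)) \<in> borel_measurable M"
    and m2: "(\<lambda>y. indicator A y * ennreal (\<rho> y powr r)) \<in> borel_measurable M"
    by (intro borel_measurable_times_ennreal A; measurable)+
  have "(\<integral>\<^sup>+ y. ennreal (\<rho> y) * (indicator A y * ennreal (u y + v y)) \<partial>M)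
      \<le> (\<integral>\<^sup>+ y. ennreal (t powr p) * (indicator A y * ennreal (u y powr p + v y powr p))
        + ennreal (2 / t powr r) * (indicator A y * ennreal (\<rho> y powr r)) \<partial>M)"
    by (intro nn_integral_mono pointwise)
  also have "\<dots> = ennreal (t powr p) * (\<integral>\<^sup>+ y. indicator A y * ennreal (u y powr p + v y powr p) \<partial>M)
        + ennreal (2 / t powr r) * (\<integral>\<^sup>+ y. indicator A y * ennreal (\<rho> y powr r) \<partial>M)"
    unfolding nn_integral_add[OF borel_measurable_times_ennreal[OF borel_measurable_const m1]
        borel_measurable_times_ennreal[OF borel_measurable_const m2]]
      nn_integral_cmult[OF m1] nn_integral_cmult[OF m2] ..
  also have "\<dots> \<le> ennreal (t powr p) * (\<integral>\<^sup>+ y. indicator A y * ennreal (u y powr p + v y powr p) \<partial>M)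
        + ennreal (2 / t powr r) * ennreal (S powr r)"
    using \<rho>_le by (intro add_left_mono mult_left_mono) auto
  also have "ennreal (2 / t powr r) * ennreal (S powr r) = ennreal (2 * S powr r / t powr r)"
    by (simp flip: ennreal_mult)
  finally show ?thesis .
qed

text \<open>Since \<eta> = 1 on the cube, the integrand is dominated by \<eta>-weighted slices, and
  the y-density \<rho> of \<eta>\<mu> turns their \<mu>-integrals into Lebesgue integrals over K_y.\<close>
lemma Mset_integral_le_slices:
  fixes f1 f2 :: "real^'n \<Rightarrow> real"
  assumes \<mu>: "\<mu> \<in> Mset Y \<gamma> c h S \<eta>" and Y: "Y \<noteq> {}" and \<gamma>: "\<gamma> > 0"
    and \<eta>: "\<eta> \<in> borel_measurable borel" "\<forall>x\<in>zcube Y c h. \<eta> x = 1"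
    and f: "\<And>x. 0 \<le> f1 x" "\<And>x. 0 \<le> f2 x" "f1 \<in> borel_measurable borel" "f2 \<in> borel_measurable borel"
    and N: "finite N"
    and near: "\<And>x. x \<in> cube c h \<Longrightarrow>
      \<exists>x0\<in>N. f1 x + f2 x \<le> f1 (yjoin Y (yproj Y x) x0) + f2 (yjoin Y (yproj Y x) x0) + \<epsilon>"
    and t: "t > 0" and \<epsilon>: "\<epsilon> \<ge> 0"
  defines "p \<equiv> p_exp (card Y) \<gamma>" and "r \<equiv> r_exp (card Y) \<gamma>"
  shows "(\<integral>\<^sup>+ x. indicator (cube c h) x * ennreal (f1 x + f2 x) \<partial>\<mu>)
    \<le> (\<Sum>x0\<in>N. ennreal (t powr p) *
          (\<integral>\<^sup>+ y. indicator (ycube Y c h) y *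
             ennreal (f1 (yjoin Y y x0) powr p + f2 (yjoin Y y x0) powr p) \<partial>lebY Y)
        + ennreal (2 * S powr r / t powr r)) + ennreal \<epsilon>"
proof -
  interpret prob_space \<mu> using \<mu> by (simp add: Mset_def borel_prob_def)
  have sets: "sets \<mu> = sets borel" using \<mu> by (simp add: Mset_def borel_prob_def)
  have p: "p > 0" and r: "r > 0" and pr: "1/p + 1/r = 1"
    using p_exp_r_exp_conjugate[of "card Y" \<gamma>] Y \<gamma> by (simp_all add: p_def r_def card_gt_0_iff)
  obtain \<rho> where \<rho>: "\<rho> \<in> borel_measurable (lebY Y)" "\<And>y. 0 \<le> \<rho> y"
    "(\<integral>\<^sup>+ y. indicator (ycube Y c h) y * ennreal (\<rho> y powr r) \<partial>lebY Y) \<le> ennreal (S powr r)"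
    and transfer: "\<And>G. G \<in> borel_measurable (lebY Y) \<Longrightarrow>
       (\<integral>\<^sup>+ x. ennreal (\<eta> x) * G (yproj Y x) \<partial>\<mu>) = (\<integral>\<^sup>+ y. ennreal (\<rho> y) * G y \<partial>lebY Y)"
    using Mset_yproj_density[OF \<mu> Y \<eta>(1)] unfolding r_def by blast
  define G where "G x0 y = indicator (ycube Y c h) y * ennreal (f1 (yjoin Y y x0) + f2 (yjoin Y y x0))"
    for x0 y
  have f_yjoin [measurable]: "(\<lambda>y. f1 (yjoin Y y x0)) \<in> borel_measurable (lebY Y)"
    "(\<lambda>y. f2 (yjoin Y y x0)) \<in> borel_measurable (lebY Y)" for x0
    using f(3,4) by (auto intro: measurable_compose[OF yjoin_measurable])
  have G [measurable]: "G x0 \<in> borel_measurable (lebY Y)" for x0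
    unfolding G_def by measurable
  have [measurable]: "(\<lambda>x. ennreal (\<eta> x) * G x0 (yproj Y x)) \<in> borel_measurable \<mu>" for x0
    using \<eta>(1) measurable_compose[OF yproj_measurable[OF sets] G]
    by (auto simp: measurable_cong_sets[OF sets refl])
  have pointwise: "indicator (cube c h) x * ennreal (f1 x + f2 x)
      \<le> (\<Sum>x0\<in>N. ennreal (\<eta> x) * G x0 (yproj Y x)) + ennreal \<epsilon>" for x
  proof (cases "x \<in> cube c h")
    case True
    then obtain x0 where x0: "x0 \<in> N"
      "f1 x + f2 x \<le> f1 (yjoin Y (yproj Y x) x0) + f2 (yjoin Y (yproj Y x) x0) + \<epsilon>"
      using near by blast
    have "ennreal (f1 x + f2 x) \<le> G x0 (yproj Y x) + ennreal \<epsilon>"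
      using x0(2) True f \<epsilon> cube_yproj_zcube[OF True]
      by (simp add: G_def ennreal_leI flip: ennreal_plus del: ennreal_plus)
    also have "G x0 (yproj Y x) = ennreal (\<eta> x) * G x0 (yproj Y x)"
      using True \<eta>(2) cube_yproj_zcube[OF True] by simp
    also have "\<dots> \<le> (\<Sum>x0\<in>N. ennreal (\<eta> x) * G x0 (yproj Y x))"
      using N x0(1) by (intro member_le_sum) auto
    finally show ?thesis using True by (simp add: add_right_mono)
  qed simp
  have "(\<integral>\<^sup>+ x. indicator (cube c h) x * ennreal (f1 x + f2 x) \<partial>\<mu>)
      \<le> (\<integral>\<^sup>+ x. (\<Sum>x0\<in>N. ennreal (\<eta> x) * G x0 (yproj Y x)) + ennreal \<epsilon> \<partial>\<mu>)"
    by (intro nn_integral_mono pointwise)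
  also have "\<dots> = (\<Sum>x0\<in>N. \<integral>\<^sup>+ x. ennreal (\<eta> x) * G x0 (yproj Y x) \<partial>\<mu>) + ennreal \<epsilon>"
    by (simp add: nn_integral_add nn_integral_sum emeasure_space_1)
  also have "\<dots> = (\<Sum>x0\<in>N. \<integral>\<^sup>+ y. ennreal (\<rho> y) * G x0 y \<partial>lebY Y) + ennreal \<epsilon>"
    by (simp add: transfer)
  also have "\<dots> \<le> (\<Sum>x0\<in>N. ennreal (t powr p) *
          (\<integral>\<^sup>+ y. indicator (ycube Y c h) y *
             ennreal (f1 (yjoin Y y x0) powr p + f2 (yjoin Y y x0) powr p) \<partial>lebY Y)
        + ennreal (2 * S powr r / t powr r)) + ennreal \<epsilon>"
    unfolding G_def using \<rho> f p r pr t
    by (intro add_right_mono sum_mono nn_integral_mult_Young_le) auto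
  finally show ?thesis .
qed

lemma exists_Young_parameters:
  fixes C S e p r :: real
  assumes C: "C \<ge> 0" and S: "S > 0" and e: "e > 0" and r: "r > 0"
  obtains t \<delta> where "t > 0" "\<delta> > 0" "C * (t powr p * \<delta> + 2 * S powr r / t powr r) \<le> e"
proof
  define t where "t = (4 * (C + 1) * S powr r / e) powr (1 / r)"
  define \<delta> where "\<delta> = e / (2 * (C + 1)) / t powr p"
  show t: "t > 0" using C S e by (simp add: t_def)
  show "\<delta> > 0" unfolding \<delta>_def using C e t by (intro divide_pos_pos mult_pos_pos) auto
  have "e * t powr r = 4 * (C + 1) * S powr r"
    using C S e r by (simp add: t_def powr_powr)
  then have "C * (2 * S powr r) \<le> e / 2 * t powr r"
    using S by (simp add: algebra_simps)
  then have "C * (2 * S powr r / t powr r) \<le> e / 2"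
    using t by (simp add: pos_divide_le_eq mult.commute)
  moreover have "C * (t powr p * \<delta>) \<le> e / 2"
  proof -
    have "t powr p * \<delta> = e / (2 * (C + 1))"
      using t by (simp add: \<delta>_def)
    moreover have "C * (e / (2 * (C + 1))) \<le> e / 2"
      using C e by (simp add: field_simps)
    ultimately show ?thesis by simp
  qed
  ultimately show "C * (t powr p * \<delta> + 2 * S powr r / t powr r) \<le> e"
    unfolding distrib_left by linarith
qed

lemma prob_space_cube_integral_le:
  assumes "prob_space \<mu>" and "\<forall>x\<in>cube c h. g x \<le> e"
  shows "(\<integral>\<^sup>+ x. indicator (cube c h) x * ennreal (g x) \<partial>\<mu>) \<le> ennreal e"
proof -
  have "(\<integral>\<^sup>+ x. indicator (cube c h) x * ennreal (g x) \<partial>\<mu>) \<le> (\<integral>\<^sup>+ x. ennreal e \<partial>\<mu>)"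
    using assms(2) by (intro nn_integral_mono) (auto simp: indicator_def ennreal_leI)
  also have "\<dots> = ennreal e" using assms(1) by (simp add: prob_space.emeasure_space_1)
  finally show ?thesis .
qed

lemma Mset_cube_integral_eventually_le_no_y:
  fixes g :: "nat \<Rightarrow> real^'n \<Rightarrow> real"
  assumes N: "finite N" and e: "e > 0"
    and near: "\<And>x. x \<in> cube c h \<Longrightarrow> \<exists>x0\<in>N. \<forall>n. g n x \<le> g n x0 + e / 3"
    and lim: "\<And>x. (\<lambda>n. g n x) \<longlonglongrightarrow> 0"
  shows "eventually (\<lambda>n. (SUP \<mu>\<in>Mset {} \<gamma> c h S \<eta>.
      \<integral>\<^sup>+ x. indicator (cube c h) x * ennreal (g n x) \<partial>\<mu>) \<le> ennreal e) sequentially"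
proof -
  have "eventually (\<lambda>n. \<forall>x0\<in>N. g n x0 < e / 3) sequentially"
    using N e by (intro eventually_ball_finite ballI order_tendstoD(2)[OF lim]) auto
  then show ?thesis
  proof eventually_elim
    case (elim n)
    have "\<forall>x\<in>cube c h. g n x \<le> e"
    proof
      fix x assume "x \<in> cube c h"
      then obtain x0 where "x0 \<in> N" "g n x \<le> g n x0 + e / 3" using near by blast
      with elim e show "g n x \<le> e" by fastforce
    qed
    then show ?case
      by (intro SUP_least prob_space_cube_integral_le) (auto simp: Mset_def borel_prob_def)
  qed
qed

lemma Mset_cube_integral_eventually_le_slices:
  fixes f1 f2 :: "nat \<Rightarrow> real^'n \<Rightarrow> real" and Y :: "'n set" and c :: "real^'n" and h \<gamma> :: real
  defines "J n x0 \<equiv> \<integral>\<^sup>+ y. indicator (ycube Y c h) y *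
      ennreal (f1 n (yjoin Y y x0) powr p_exp (card Y) \<gamma> + f2 n (yjoin Y y x0) powr p_exp (card Y) \<gamma>)
      \<partial>lebY Y"
  assumes Y: "Y \<noteq> {}" and \<gamma>: "\<gamma> > 0" and S: "S > 0" and e: "e > 0"
    and \<eta>: "\<eta> \<in> borel_measurable borel" "\<forall>x\<in>zcube Y c h. \<eta> x = 1"
    and f: "\<And>n x. 0 \<le> f1 n x" "\<And>n x. 0 \<le> f2 n x"
      "\<And>n. f1 n \<in> borel_measurable borel" "\<And>n. f2 n \<in> borel_measurable borel"
    and N: "finite N"
    and near: "\<And>x. x \<in> cube c h \<Longrightarrow> \<exists>x0\<in>N. \<forall>n.
      f1 n x + f2 n x \<le> f1 n (yjoin Y (yproj Y x) x0) + f2 n (yjoin Y (yproj Y x) x0) + e / 3"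
    and slices: "\<And>x0. (\<lambda>n. J n x0) \<longlonglongrightarrow> 0"
  shows "eventually (\<lambda>n. (SUP \<mu>\<in>Mset Y \<gamma> c h S \<eta>.
      \<integral>\<^sup>+ x. indicator (cube c h) x * ennreal (f1 n x + f2 n x) \<partial>\<mu>) \<le> ennreal e) sequentially"
proof -
  define p where "p = p_exp (card Y) \<gamma>"
  define r where "r = r_exp (card Y) \<gamma>"
  have r: "r > 0" using p_exp_r_exp_conjugate[of "card Y" \<gamma>] Y \<gamma> by (simp add: r_def card_gt_0_iff)
  obtain t \<delta> where t: "t > 0" and \<delta>: "\<delta> > 0"
    and small: "card N * (t powr p * \<delta> + 2 * S powr r / t powr r) \<le> 2 * e / 3"
    using exists_Young_parameters[of "card N" S "2 * e / 3" r p] S e r by auto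
  have "eventually (\<lambda>n. \<forall>x0\<in>N. J n x0 < ennreal \<delta>) sequentially"
    using N \<delta> by (intro eventually_ball_finite ballI order_tendstoD(2)[OF slices]) auto
  then show ?thesis
  proof eventually_elim
    case (elim n)
    show ?case
    proof (rule SUP_least)
      fix \<mu> assume \<mu>: "\<mu> \<in> Mset Y \<gamma> c h S \<eta>"
      have "(\<integral>\<^sup>+ x. indicator (cube c h) x * ennreal (f1 n x + f2 n x) \<partial>\<mu>)
          \<le> (\<Sum>x0\<in>N. ennreal (t powr p) * J n x0 + ennreal (2 * S powr r / t powr r)) + ennreal (e / 3)"
        unfolding J_def p_def r_def using e t near
        by (intro Mset_integral_le_slices[OF \<mu> Y \<gamma> \<eta> f N]) auto
      also have "\<dots> \<le> (\<Sum>x0\<in>N. ennreal (t powr p * \<delta> + 2 * S powr r / t powr r)) + ennreal (e / 3)"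
      proof (intro add_right_mono sum_mono)
        fix x0 assume "x0 \<in> N"
        then have "ennreal (t powr p) * J n x0 \<le> ennreal (t powr p) * ennreal \<delta>"
          using elim by (intro mult_left_mono) auto
        also have "\<dots> = ennreal (t powr p * \<delta>)"
          using \<delta> by (simp add: ennreal_mult)
        finally show "ennreal (t powr p) * J n x0 + ennreal (2 * S powr r / t powr r)
            \<le> ennreal (t powr p * \<delta> + 2 * S powr r / t powr r)"
          using \<delta> by (simp add: ennreal_plus add_right_mono)
      qed
      also have "\<dots> = ennreal (card N * (t powr p * \<delta> + 2 * S powr r / t powr r) + e / 3)"
        using \<delta> e
        by (subst ennreal_plus) (auto simp: ennreal_of_nat_eq_real_of_nat ennreal_mult)
      also have "\<dots> \<le> ennreal e"
        using small by (intro ennreal_leI) linarith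
      finally show "(\<integral>\<^sup>+ x. indicator (cube c h) x * ennreal (f1 n x + f2 n x) \<partial>\<mu>) \<le> ennreal e" .
    qed
  qed
qed

lemma SUP_Mset_cube_integral_tendsto_0:
  fixes f1 f2 :: "nat \<Rightarrow> real^'n \<Rightarrow> real"
  assumes \<gamma>: "\<gamma> > 0" and S: "S > 0"
    and \<eta>: "\<eta> \<in> borel_measurable borel" "\<forall>x\<in>zcube Y c h. \<eta> x = 1"
    and f: "\<And>n x. 0 \<le> f1 n x" "\<And>n x. 0 \<le> f2 n x"
      "\<And>n. f1 n \<in> borel_measurable borel" "\<And>n. f2 n \<in> borel_measurable borel"
    and \<omega>: "continuous_on {0..} \<omega>" "\<omega> 0 = 0"
    and osc: "\<And>n x x'. x \<in> cube c h \<Longrightarrow> x' \<in> cube c h \<Longrightarrow> (\<forall>k\<in>Y. x $ k = x' $ k) \<Longrightarrow>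
      f1 n x + f2 n x \<le> f1 n x' + f2 n x' + \<omega> (norm (x - x'))"
    and pointwise: "\<And>x. Y = {} \<Longrightarrow> (\<lambda>n. f1 n x + f2 n x) \<longlonglongrightarrow> 0"
    and slices: "\<And>x0. Y \<noteq> {} \<Longrightarrow> (\<lambda>n. \<integral>\<^sup>+ y. indicator (ycube Y c h) y *
      ennreal (f1 n (yjoin Y y x0) powr p_exp (card Y) \<gamma> + f2 n (yjoin Y y x0) powr p_exp (card Y) \<gamma>)
      \<partial>lebY Y) \<longlonglongrightarrow> 0"
  shows "(\<lambda>n. SUP \<mu>\<in>Mset Y \<gamma> c h S \<eta>.
      \<integral>\<^sup>+ x. indicator (cube c h) x * ennreal (f1 n x + f2 n x) \<partial>\<mu>) \<longlonglongrightarrow> 0"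
proof (rule ennreal_tendsto_0I)
  fix e :: real assume e: "e > 0"
  obtain N where N: "finite N" and near: "\<And>x. x \<in> cube c h \<Longrightarrow> \<exists>x0\<in>N. \<forall>n.
      f1 n x + f2 n x \<le> f1 n (yjoin Y (yproj Y x) x0) + f2 n (yjoin Y (yproj Y x) x0) + e / 3"
    by (rule cube_finite_slices_approx[where g="\<lambda>n x. f1 n x + f2 n x" and \<epsilon>="e / 3", OF \<omega> _ osc])
      (use e in auto)
  show "eventually (\<lambda>n. (SUP \<mu>\<in>Mset Y \<gamma> c h S \<eta>.
      \<integral>\<^sup>+ x. indicator (cube c h) x * ennreal (f1 n x + f2 n x) \<partial>\<mu>) \<le> ennreal e) sequentially"
  proof (cases "Y = {}")
    case True
    show ?thesis
      unfolding True
    proof (rule Mset_cube_integral_eventually_le_no_y[OF N e])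
      show "\<exists>x0\<in>N. \<forall>n. f1 n x + f2 n x \<le> f1 n x0 + f2 n x0 + e / 3" if "x \<in> cube c h" for x
        using near[OF that] True by simp
      show "(\<lambda>n. f1 n x + f2 n x) \<longlonglongrightarrow> 0" for x
        using pointwise True by simp
    qed
  next
    case False
    show ?thesis
      by (rule Mset_cube_integral_eventually_le_slices[OF False \<gamma> S e \<eta> f N near slices[OF False]])
  qed
qed

lemma coeff_ok_measurable:
  assumes "coeff_ok a b" "borel_prob \<mu>"
  shows "(\<lambda>x. a i j x \<mu>) \<in> borel_measurable borel" "(\<lambda>x. b i x \<mu>) \<in> borel_measurable borel"
  using assms unfolding coeff_ok_def by blast+

lemma H1_3_coeff_diff_modulus:
  assumes "H1_3 V Y a b" "h > 0"
  obtains \<omega> where "continuous_on {0..} \<omega>" "\<omega> 0 = 0"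
    "\<And>\<mu> \<nu> x x'. \<mu> \<in> PR V R \<Longrightarrow> \<nu> \<in> PR V R \<Longrightarrow> x \<in> cube c h \<Longrightarrow> x' \<in> cube c h \<Longrightarrow>
      \<forall>k\<in>Y. x $ k = x' $ k \<Longrightarrow>
      \<bar>a i j x \<mu> - a i j x \<nu>\<bar> + \<bar>b i x \<mu> - b i x \<nu>\<bar>
        \<le> \<bar>a i j x' \<mu> - a i j x' \<nu>\<bar> + \<bar>b i x' \<mu> - b i x' \<nu>\<bar> + \<omega> (norm (x - x'))"
proof -
  from assms obtain \<omega> where \<omega>: "continuous_on {0..} \<omega>" "\<omega> 0 = 0"
    and mod: "\<forall>i j. \<forall>x\<in>cube c h. \<forall>x'\<in>cube c h. \<forall>\<mu>\<in>PR V R. (\<forall>k\<in>Y. x $ k = x' $ k) \<longrightarrow>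
      \<bar>a i j x \<mu> - a i j x' \<mu>\<bar> + \<bar>b i x \<mu> - b i x' \<mu>\<bar> \<le> \<omega> (norm (x - x'))"
    unfolding H1_3_def by blast
  show ?thesis
  proof (rule that[of "\<lambda>t. 2 * \<omega> t"])
    show "continuous_on {0..} (\<lambda>t. 2 * \<omega> t)" "2 * \<omega> 0 = 0"
      using \<omega> by (auto intro: continuous_intros)
    fix \<mu> \<nu> x x' assume "\<mu> \<in> PR V R" "\<nu> \<in> PR V R" "x \<in> cube c h" "x' \<in> cube c h"
      "\<forall>k\<in>Y. x $ k = x' $ k"
    with mod have "\<bar>a i j x \<mu> - a i j x' \<mu>\<bar> + \<bar>b i x \<mu> - b i x' \<mu>\<bar> \<le> \<omega> (norm (x - x'))"
      "\<bar>a i j x \<nu> - a i j x' \<nu>\<bar> + \<bar>b i x \<nu> - b i x' \<nu>\<bar> \<le> \<omega> (norm (x - x'))"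
      by blast+
    then show "\<bar>a i j x \<mu> - a i j x \<nu>\<bar> + \<bar>b i x \<mu> - b i x \<nu>\<bar>
        \<le> \<bar>a i j x' \<mu> - a i j x' \<nu>\<bar> + \<bar>b i x' \<mu> - b i x' \<nu>\<bar> + 2 * \<omega> (norm (x - x'))"
      by linarith
  qed
qed

lemma H2_coeff_diff_limits:
  assumes "H2 V Y \<gamma> a b" "\<forall>n. \<sigma>s n \<in> PR V R" "\<sigma> \<in> PR V R" "Vweak_conv V \<sigma>s \<sigma>"
  shows "Y = {} \<Longrightarrow>
      (\<lambda>n. \<bar>a i j x (\<sigma>s n) - a i j x \<sigma>\<bar> + \<bar>b i x (\<sigma>s n) - b i x \<sigma>\<bar>) \<longlonglongrightarrow> 0"
    "Y \<noteq> {} \<Longrightarrow> h > 0 \<Longrightarrow> (\<lambda>n. \<integral>\<^sup>+ y. indicator (ycube Y c h) y *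
      ennreal (\<bar>a i j (yjoin Y y x0) (\<sigma>s n) - a i j (yjoin Y y x0) \<sigma>\<bar> powr p_exp (card Y) \<gamma>
        + \<bar>b i (yjoin Y y x0) (\<sigma>s n) - b i (yjoin Y y x0) \<sigma>\<bar> powr p_exp (card Y) \<gamma>) \<partial>lebY Y)
      \<longlonglongrightarrow> 0"
  using assms(1)[unfolded H2_def, rule_format, OF conjI[OF assms(2) conjI[OF assms(3,4)]], of i j]
  by (simp_all add: abs_minus_commute)

theorem lemma4p3:
  fixes V :: "real^'n \<Rightarrow> real"
    and Y :: "'n set"
    and \<gamma> :: real
    and a :: "'n \<Rightarrow> 'n \<Rightarrow> real^'n \<Rightarrow> (real^'n) measure \<Rightarrow> real"
    and b :: "'n \<Rightarrow> real^'n \<Rightarrow> (real^'n) measure \<Rightarrow> real"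
    and R S h :: real and c :: "real^'n" and \<eta> :: "real^'n \<Rightarrow> real"
    and \<sigma>s :: "nat \<Rightarrow> (real^'n) measure" and \<sigma> :: "(real^'n) measure"
  assumes V: "C2 V" "\<forall>x. 0 \<le> V x" "filterlim V at_top at_infinity"
    and coeff: "coeff_ok a b"
    and gamma: "\<gamma> > 0"
    and H1: "H1_1 V Y a" "H1_2 V a b" "H1_3 V Y a b"
    and H2: "H2 V Y \<gamma> a b"
    and RS: "R > 0" "S > 0"
    and K: "h > 0"
    and eta: "z_cutoff Y \<eta>" "\<forall>x\<in>zcube Y c h. \<eta> x = 1"
    and conv: "\<forall>n. \<sigma>s n \<in> PR V R" "\<sigma> \<in> PR V R" "weak_conv_bc \<sigma>s \<sigma>"
  shows "\<forall>i j. (\<lambda>n. SUP \<mu>\<in>Mset Y \<gamma> c h S \<eta>.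
            \<integral>\<^sup>+ x. indicator (cube c h) x *
               ennreal (\<bar>a i j x (\<sigma>s n) - a i j x \<sigma>\<bar> + \<bar>b i x (\<sigma>s n) - b i x \<sigma>\<bar>) \<partial>\<mu>)
          \<longlonglongrightarrow> 0"
proof (intro allI)
  fix i j
  have Vweak: "Vweak_conv V \<sigma>s \<sigma>"
    using weak_conv_bc_imp_Vweak_conv[OF C2_imp_continuous[OF V(1)] V(2,3) _ conv] RS(1) by simp
  obtain \<omega> where \<omega>: "continuous_on {0..} \<omega>" "\<omega> 0 = 0"
    and osc: "\<And>\<mu> \<nu> x x'. \<mu> \<in> PR V R \<Longrightarrow> \<nu> \<in> PR V R \<Longrightarrow> x \<in> cube c h \<Longrightarrow> x' \<in> cube c h \<Longrightarrow>
      \<forall>k\<in>Y. x $ k = x' $ k \<Longrightarrow>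
      \<bar>a i j x \<mu> - a i j x \<nu>\<bar> + \<bar>b i x \<mu> - b i x \<nu>\<bar>
        \<le> \<bar>a i j x' \<mu> - a i j x' \<nu>\<bar> + \<bar>b i x' \<mu> - b i x' \<nu>\<bar> + \<omega> (norm (x - x'))"
    using H1_3_coeff_diff_modulus[OF H1(3) K] by metis
  have borel_prob: "borel_prob (\<sigma>s n)" "borel_prob \<sigma>" for n
    using conv(1,2) by (auto simp: PR_def)
  have \<eta>_measurable: "\<eta> \<in> borel_measurable borel"
    using eta(1) smooth_imp_continuous by (auto simp: z_cutoff_def intro: borel_measurable_continuous_onI)
  show "(\<lambda>n. SUP \<mu>\<in>Mset Y \<gamma> c h S \<eta>. \<integral>\<^sup>+ x. indicator (cube c h) x *
      ennreal (\<bar>a i j x (\<sigma>s n) - a i j x \<sigma>\<bar> + \<bar>b i x (\<sigma>s n) - b i x \<sigma>\<bar>) \<partial>\<mu>) \<longlonglongrightarrow> 0"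
    using coeff_ok_measurable[OF coeff borel_prob(1)] coeff_ok_measurable[OF coeff borel_prob(2)]
      osc conv(1,2) H2_coeff_diff_limits[OF H2 conv(1,2) Vweak] K
    by (intro SUP_Mset_cube_integral_tendsto_0[OF gamma RS(2) \<eta>_measurable eta(2) _ _ _ _ \<omega>]) auto
qed

end
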